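(* Let $X$ be a real Banach space, let $K\subset X$ be compact, let $\lambda_1,\dots,\lambda_m\in X^*$ with $\|\lambda_j\|_{X^*}=1$, and let $w\in\mathbb{R}^m$. Then $$\lim_{\varepsilon\to 0^+} R(K(w,\varepsilon))_X=R(K_w)_X .$$
   Context: For $g\in X$ write $\lambda(g):=(\lambda_1(g),\dots,\lambda_m(g))\in\mathbb{R}^m$. On $\mathbb{R}^m$ use the norm $\|v\|:=\big[\frac1m\sum_{j=1}^m|v_j|^2\big]^{1/2}$. For $w\in\mathbb{R}^m$, $K_w:=\{f\in K:\ \lambda(f)=w\}$, and for $\varepsilon>0$, $K(w,\varepsilon):=\bigcup_{w'\in\mathbb{R}^m:\ \|w'-w\|\le\varepsilon}K_{w'}$. For a set $S\subset X$, the Chebyshev radius is $R(S)_X:=\inf\{r:\ S\subset B(z,r)_X \text{ for some } z\in X\}$, where $B(z,r)_X$ is the closed ball in $X$ of center $z$ and radius $r$. *)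

theory Defs
  imports "HOL-Analysis.Analysis"
begin

text \<open>Normalized Euclidean norm on R^m, vectors represented as nat => real,
  only the coordinates j < m matter.\<close>
definition mnorm :: "nat \<Rightarrow> (nat \<Rightarrow> real) \<Rightarrow> real" where
  "mnorm m v = sqrt ((1 / real m) * (\<Sum>j<m. \<bar>v j\<bar>^2))"

definition fiber :: "'a set \<Rightarrow> nat \<Rightarrow> (nat \<Rightarrow> 'a \<Rightarrow> real) \<Rightarrow> (nat \<Rightarrow> real) \<Rightarrow> 'a set" where
  "fiber K m lam w = {f \<in> K. \<forall>j<m. lam j f = w j}"

definition fiber_nbhd :: "'a set \<Rightarrow> nat \<Rightarrow> (nat \<Rightarrow> 'a \<Rightarrow> real) \<Rightarrow> (nat \<Rightarrow> real) \<Rightarrow> real \<Rightarrow> 'a set" where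
  "fiber_nbhd K m lam w \<epsilon> =
     \<Union> {fiber K m lam w' | w'. mnorm m (\<lambda>j. w' j - w j) \<le> \<epsilon>}"

definition cheb_radius :: "'a::metric_space set \<Rightarrow> real" where
  "cheb_radius S = Inf {r. \<exists>z. S \<subseteq> cball z r}"

end

theory Submission
  imports Defs
begin

text \<open>The fibre \<open>K\<^sub>w\<close> and the thickened fibres \<open>K(w,\<epsilon>)\<close> are the zero set and the sublevel sets
  of the continuous function \<open>f \<mapsto> \<parallel>\<lambda>(f) - w\<parallel>\<close> on the compact set \<open>K\<close>. By compactness the
  sublevel sets for small \<open>\<epsilon>\<close> lie in an arbitrarily thin neighbourhood of the zero set, and
  thickening a set by \<open>\<delta>\<close> raises its Chebyshev radius by at most \<open>\<delta>\<close>; monotonicity of the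
  radius gives the other inequality.\<close>

lemma bdd_below_cball_radii:
  fixes S :: "'a::metric_space set"
  assumes "S \<noteq> {}"
  shows "bdd_below {r. \<exists>z. S \<subseteq> cball z r}"
proof (rule bdd_belowI)
  obtain s where "s \<in> S" using assms by blast
  fix r assume "r \<in> {r. \<exists>z. S \<subseteq> cball z r}"
  then obtain z where "S \<subseteq> cball z r" by blast
  with \<open>s \<in> S\<close> have "dist z s \<le> r" by auto
  then show "0 \<le> r" using zero_le_dist[of z s] by linarith
qed

lemma cheb_radius_mono:
  fixes S T :: "'a::metric_space set"
  assumes "S \<noteq> {}" "S \<subseteq> T" "bounded T"
  shows "cheb_radius S \<le> cheb_radius T"
proof -
  have "{r. \<exists>z. T \<subseteq> cball z r} \<noteq> {}"
    using assms(3) bounded_subset_cball by blast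
  moreover have "{r. \<exists>z. T \<subseteq> cball z r} \<subseteq> {r. \<exists>z. S \<subseteq> cball z r}"
    using assms(2) by blast
  ultimately show ?thesis
    unfolding cheb_radius_def by (rule cInf_superset_mono[OF _ bdd_below_cball_radii[OF assms(1)]])
qed

lemma cheb_radius_le_thickening:
  fixes S T :: "'a::metric_space set"
  assumes "bounded S" "T \<noteq> {}" "T \<subseteq> (\<Union>x\<in>S. ball x d)"
  shows "cheb_radius T \<le> cheb_radius S + d"
proof -
  have "cheb_radius T - d \<le> r" if r: "r \<in> {r. \<exists>z. S \<subseteq> cball z r}" for r
  proof -
    obtain z where z: "S \<subseteq> cball z r" using r by blast
    have "T \<subseteq> cball z (r + d)"
    proof
      fix y assume "y \<in> T"
      then obtain x where "x \<in> S" "dist x y < d" using assms(3) by auto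
      moreover have "dist z y \<le> dist z x + dist x y" by (rule dist_triangle)
      ultimately show "y \<in> cball z (r + d)" using z by force
    qed
    then have "r + d \<in> {r. \<exists>z. T \<subseteq> cball z r}" by blast
    then have "cheb_radius T \<le> r + d"
      unfolding cheb_radius_def by (rule cInf_lower[OF _ bdd_below_cball_radii[OF assms(2)]])
    then show ?thesis by simp
  qed
  moreover have "{r. \<exists>z. S \<subseteq> cball z r} \<noteq> {}"
    using assms(1) bounded_subset_cball by blast
  ultimately have "cheb_radius T - d \<le> cheb_radius S"
    unfolding cheb_radius_def[of S] by (intro cInf_greatest)
  then show ?thesis by simp
qed

lemma sublevel_sets_eventually_near_zero_set:
  fixes g :: "'a::metric_space \<Rightarrow> real"
  assumes "compact K" "continuous_on K g" "d > 0"
  shows "\<forall>\<^sub>F e in at_right 0. {x\<in>K. g x \<le> e} \<subseteq> (\<Union>x\<in>{x\<in>K. g x \<le> 0}. ball x d)"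
proof -
  define U where "U = (\<Union>x\<in>{x\<in>K. g x \<le> 0}. ball x d)"
  define C where "C = K - U"
  have "compact C"
    unfolding C_def U_def using assms(1) by (intro compact_diff) auto
  have "\<exists>e0>0. \<forall>x\<in>C. e0 \<le> g x"
  proof (cases "C = {}")
    case False
    obtain x0 where x0: "x0 \<in> C" "\<forall>x\<in>C. g x0 \<le> g x"
      using continuous_attains_inf[OF \<open>compact C\<close> False] assms(2)
      by (metis C_def Diff_subset continuous_on_subset)
    have "x0 \<notin> {x\<in>K. g x \<le> 0}"
      using x0(1) assms(3) unfolding C_def U_def by auto
    then have "g x0 > 0"
      using x0(1) unfolding C_def by auto
    with x0(2) show ?thesis by blast
  qed (intro exI[of _ 1]; simp)
  then obtain e0 where "e0 > 0" and e0: "\<And>x. x \<in> C \<Longrightarrow> e0 \<le> g x" by blast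
  have "{x\<in>K. g x \<le> e} \<subseteq> U" if "e < e0" for e
  proof
    fix x assume "x \<in> {x\<in>K. g x \<le> e}"
    with that have "x \<notin> C" using e0[of x] by force
    with \<open>x \<in> {x\<in>K. g x \<le> e}\<close> show "x \<in> U" unfolding C_def by blast
  qed
  then show ?thesis
    unfolding U_def eventually_at_right_field using \<open>e0 > 0\<close> by blast
qed

lemma cheb_radius_sublevel_tendsto:
  fixes g :: "'a::metric_space \<Rightarrow> real"
  assumes "compact K" "continuous_on K g"
  shows "((\<lambda>e. cheb_radius {x\<in>K. g x \<le> e}) \<longlongrightarrow> cheb_radius {x\<in>K. g x \<le> 0}) (at_right 0)"
proof (rule tendstoI)
  fix d :: real assume "d > 0"
  let ?Z = "{x\<in>K. g x \<le> 0}"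
  have bounded: "bounded {x\<in>K. g x \<le> e}" for e
    using compact_imp_bounded[OF assms(1)] by (rule bounded_subset) auto
  have "\<forall>\<^sub>F e in at_right 0. {x\<in>K. g x \<le> e} \<subseteq> (\<Union>x\<in>?Z. ball x (d/2))"
    using sublevel_sets_eventually_near_zero_set[OF assms] \<open>d > 0\<close> by simp
  moreover have "\<forall>\<^sub>F e in at_right 0. (0::real) < e"
    by (simp add: eventually_at_right_less)
  ultimately show "\<forall>\<^sub>F e in at_right 0.
      dist (cheb_radius {x\<in>K. g x \<le> e}) (cheb_radius ?Z) < d"
  proof eventually_elim
    case (elim e)
    show ?case
    proof (cases "?Z = {}")
      case True
      with elim have "{x\<in>K. g x \<le> e} = ?Z" by auto
      then show ?thesis using \<open>d > 0\<close> by simp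
    next
      case False
      have "?Z \<subseteq> {x\<in>K. g x \<le> e}" using elim(2) by auto
      then have "cheb_radius ?Z \<le> cheb_radius {x\<in>K. g x \<le> e}"
        by (rule cheb_radius_mono[OF False _ bounded])
      moreover have "{x\<in>K. g x \<le> e} \<noteq> {}"
        using False \<open>?Z \<subseteq> _\<close> by blast
      then have "cheb_radius {x\<in>K. g x \<le> e} \<le> cheb_radius ?Z + d/2"
        by (rule cheb_radius_le_thickening[OF bounded _ elim(1)])
      ultimately show ?thesis using \<open>d > 0\<close> by (simp add: dist_real_def)
    qed
  qed
qed

lemma mnorm_nonneg: "0 \<le> mnorm m v"
  unfolding mnorm_def by (simp add: sum_nonneg)

lemma mnorm_eq_0_iff: "mnorm m v = 0 \<longleftrightarrow> (\<forall>j<m. v j = 0)"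
proof (cases "m = 0")
  case False
  then have "mnorm m v = 0 \<longleftrightarrow> (\<Sum>j<m. \<bar>v j\<bar>^2) = 0"
    unfolding mnorm_def by simp
  also have "\<dots> \<longleftrightarrow> (\<forall>j<m. v j = 0)"
    by (subst sum_nonneg_eq_0_iff) auto
  finally show ?thesis .
qed (simp add: mnorm_def)

lemma continuous_on_mnorm:
  assumes "\<And>j. j < m \<Longrightarrow> continuous_on S (h j)"
  shows "continuous_on S (\<lambda>x. mnorm m (\<lambda>j. h j x))"
  unfolding mnorm_def using assms
  by (intro continuous_intros continuous_on_sum) auto

lemma fiber_eq_zero_set:
  "fiber K m lam w = {f\<in>K. mnorm m (\<lambda>j. lam j f - w j) \<le> 0}"
proof -
  have "mnorm m (\<lambda>j. lam j f - w j) \<le> 0 \<longleftrightarrow> (\<forall>j<m. lam j f = w j)" for f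
    using mnorm_nonneg[of m "\<lambda>j. lam j f - w j"] mnorm_eq_0_iff[of m "\<lambda>j. lam j f - w j"]
    by auto
  then show ?thesis unfolding fiber_def by auto
qed

lemma fiber_nbhd_eq_sublevel:
  "fiber_nbhd K m lam w e = {f\<in>K. mnorm m (\<lambda>j. lam j f - w j) \<le> e}"
proof (intro antisym subsetI)
  fix f assume "f \<in> fiber_nbhd K m lam w e"
  then obtain w' where f: "f \<in> fiber K m lam w'" and "mnorm m (\<lambda>j. w' j - w j) \<le> e"
    unfolding fiber_nbhd_def by blast
  moreover have "mnorm m (\<lambda>j. w' j - w j) = mnorm m (\<lambda>j. lam j f - w j)"
    using f unfolding mnorm_def fiber_def by (auto intro!: sum.cong)
  ultimately show "f \<in> {f\<in>K. mnorm m (\<lambda>j. lam j f - w j) \<le> e}"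
    unfolding fiber_def by auto
next
  fix f assume f: "f \<in> {f\<in>K. mnorm m (\<lambda>j. lam j f - w j) \<le> e}"
  then have "f \<in> fiber K m lam (\<lambda>j. lam j f)"
    unfolding fiber_def by auto
  with f show "f \<in> fiber_nbhd K m lam w e"
    unfolding fiber_nbhd_def by blast
qed

theorem lemma2p1:
  fixes K :: "'a::banach set"
    and m :: nat
    and lam :: "nat \<Rightarrow> 'a \<Rightarrow> real"
    and w :: "nat \<Rightarrow> real"
  assumes "compact K"
    and "\<And>j. j < m \<Longrightarrow> bounded_linear (lam j)"
    and "\<And>j. j < m \<Longrightarrow> onorm (lam j) = 1"
  shows "((\<lambda>\<epsilon>. cheb_radius (fiber_nbhd K m lam w \<epsilon>))
           \<longlongrightarrow> cheb_radius (fiber K m lam w)) (at_right 0)"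
proof -
  have "continuous_on K (\<lambda>f. mnorm m (\<lambda>j. lam j f - w j))"
    using assms(2) by (intro continuous_on_mnorm continuous_intros linear_continuous_on)
  from cheb_radius_sublevel_tendsto[OF assms(1) this] show ?thesis
    unfolding fiber_nbhd_eq_sublevel fiber_eq_zero_set .
qed

end
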